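(* Let $A$ be an $m\times m$ minimally non-totally unimodular matrix and let $x\in\mathbb{Q}^m$. The matrix $A'=[A\;x]$ obtained by adding the column $x$ to $A$ is totally equimodular if and only if $x=\mathbf 0$ or $x=\pm A^j$ for some column $A^j$ of $A$.
   Context: A matrix is totally unimodular if all its square submatrices have determinant in $\{0,\pm1\}$; it is minimally non-totally unimodular if it is not totally unimodular but all its proper submatrices are. An $m\times n$ matrix is equimodular if it has full row rank and all its nonzero $m\times m$ minors have the same absolute value; a matrix is totally equimodular if every set of linearly independent rows forms an equimodular matrix. *)

theory Defs
  imports "Jordan_Normal_Form.DL_Submatrix" "Jordan_Normal_Form.Determinant"
begin

definition totally_unimodular :: "rat mat \<Rightarrow> bool" where
  "totally_unimodular A \<longleftrightarrow>
     (\<forall>I J. I \<subseteq> {..<dim_row A} \<longrightarrow> J \<subseteq> {..<dim_col A} \<longrightarrow> card I = card J \<longrightarrow>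
        det (submatrix A I J) \<in> {-1, 0, 1})"

definition minimally_non_TU :: "rat mat \<Rightarrow> bool" where
  "minimally_non_TU A \<longleftrightarrow> \<not> totally_unimodular A \<and>
     (\<forall>I J. I \<subseteq> {..<dim_row A} \<longrightarrow> J \<subseteq> {..<dim_col A} \<longrightarrow>
        (I \<noteq> {..<dim_row A} \<or> J \<noteq> {..<dim_col A}) \<longrightarrow>
        totally_unimodular (submatrix A I J))"

definition rows_lin_indep :: "rat mat \<Rightarrow> nat set \<Rightarrow> bool" where
  "rows_lin_indep A I \<longleftrightarrow> I \<subseteq> {..<dim_row A} \<and>
     (\<forall>c. (\<forall>j<dim_col A. (\<Sum>i\<in>I. c i * A $$ (i, j)) = 0) \<longrightarrow> (\<forall>i\<in>I. c i = 0))"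

definition full_row_rank :: "rat mat \<Rightarrow> bool" where
  "full_row_rank A \<longleftrightarrow> rows_lin_indep A {..<dim_row A}"

definition equimodular :: "rat mat \<Rightarrow> bool" where
  "equimodular A \<longleftrightarrow> full_row_rank A \<and>
     (\<forall>J1 J2. J1 \<subseteq> {..<dim_col A} \<longrightarrow> J2 \<subseteq> {..<dim_col A} \<longrightarrow>
        card J1 = dim_row A \<longrightarrow> card J2 = dim_row A \<longrightarrow>
        det (submatrix A UNIV J1) \<noteq> 0 \<longrightarrow> det (submatrix A UNIV J2) \<noteq> 0 \<longrightarrow>
        \<bar>det (submatrix A UNIV J1)\<bar> = \<bar>det (submatrix A UNIV J2)\<bar>)"

definition totally_equimodular :: "rat mat \<Rightarrow> bool" where
  "totally_equimodular A \<longleftrightarrow>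
     (\<forall>I. rows_lin_indep A I \<longrightarrow> equimodular (submatrix A I UNIV))"

definition add_col :: "rat mat \<Rightarrow> rat vec \<Rightarrow> rat mat" where
  "add_col A x = mat (dim_row A) (dim_col A + 1)
     (\<lambda>(i, j). if j < dim_col A then A $$ (i, j) else x $ i)"

end

theory Submission
  imports Defs
begin

(* Backward direction: after replacing x by the column it equals (up to sign), every nonzero
   maximal minor of a row subset of [A x] is, up to sign, a minor of A of the same size; by
   minimality these are 1 in absolute value for proper size and |det A| for full size.

   Forward direction: write x = A z. By Cramer's rule, replacing column k of A by x multiplies
   det A by z_k, so equimodularity of [A x] gives z_k \<in> {-1, 0, 1}. Minimality forces every
   (m-1)-minor of A to be \<plusminus>1. If z_k and z_l were both nonzero, every (m-1)-minor of
   A[k := x] avoiding column l would equal z_k(\<plusminus>1) + z_l(\<plusminus>1) \<in> {0, \<plusminus>2}, while equimodularity,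
   compared with the unit minor of A on the same rows, puts it in {0, \<plusminus>1}. So all cofactors of
   A[k := x] along column l vanish, contradicting det A[k := x] = z_k det A \<noteq> 0. *)

lemma abs_signof [simp]: "\<bar>(signof p :: 'a :: linordered_idom)\<bar> = 1"
  by (cases p rule: sign_cases) auto

lemma mem_sign_set_iff_abs: "(a :: 'a :: linordered_idom) \<in> {-1, 0, 1} \<longleftrightarrow> \<bar>a\<bar> \<in> {0, 1}"
  by (cases "a \<ge> 0") auto

lemma Ints_abs_less_1_imp_0: "(q :: 'a :: linordered_idom) \<in> \<int> \<Longrightarrow> \<bar>q\<bar> < 1 \<Longrightarrow> q = 0"
  by (elim Ints_cases) (metis of_int_0 of_int_abs of_int_less_1_iff zabs_less_one_iff)

lemma insert_index_less: "r < n \<Longrightarrow> insert_index i r < Suc n"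
  by (simp add: insert_index_def)

lemma bij_betw_insert_index:
  assumes "i < Suc n"
  shows "bij_betw (insert_index i) {..<n} ({..<Suc n} - {i})"
  using insert_index_image[OF assms] insert_index_inj_on[of i "{..<n}"]
  by (simp add: bij_betw_def atLeast0LessThan)

lemma delete_index_less: "i < Suc n \<Longrightarrow> j < Suc n \<Longrightarrow> j \<noteq> i \<Longrightarrow> delete_index i j < n"
  by (auto simp: delete_index_def)

lemma bij_betw_subst_value:
  assumes h: "bij_betw h D S" and a: "a \<in> S" and b: "b \<notin> S"
  shows "bij_betw (\<lambda>c. if h c = a then b else h c) D (insert b (S - {a}))"
proof -
  have "bij_betw (\<lambda>y. if y = a then b else y) S (insert b (S - {a}))"
    using a b by (auto simp: bij_betw_def inj_on_def image_def)
  from bij_betw_trans[OF h this] show ?thesis by (simp add: comp_def)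
qed

lemma bij_betw_pick:
  assumes "finite I"
  shows "bij_betw (pick I) {..<card I} I"
proof -
  have inj: "inj_on (pick I) {..<card I}"
    by (intro inj_onI) (metis lessThan_iff nat_neq_iff pick_mono_le)
  have "pick I ` {..<card I} \<subseteq> I" using pick_in_set_le by auto
  moreover have "card (pick I ` {..<card I}) = card I" using card_image[OF inj] by simp
  ultimately have "pick I ` {..<card I} = I" using assms by (simp add: card_subset_eq)
  thus ?thesis using inj by (simp add: bij_betw_def)
qed

lemma bij_betw_permutes_reindex:
  fixes r :: nat
  assumes f: "bij_betw f {..<r} I" and f': "bij_betw f' {..<r} I"
  obtains p where "p permutes {0..<r}" "\<And>i. i < r \<Longrightarrow> f' (p i) = f i"
proof -
  define p where "p = (\<lambda>i. if i < r then inv_into {..<r} f' (f i) else i)"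
  have "bij_betw (inv_into {..<r} f' \<circ> f) {..<r} {..<r}"
    using bij_betw_trans[OF f bij_betw_inv_into[OF f']] .
  hence "bij_betw p {..<r} {..<r}"
    by (rule bij_betw_cong[THEN iffD1, rotated]) (auto simp: p_def)
  hence "p permutes {..<r}" by (intro bij_imp_permutes) (auto simp: p_def)
  hence "p permutes {0..<r}" by (simp add: atLeast0LessThan)
  moreover have "f' (p i) = f i" if "i < r" for i
  proof -
    have "f i \<in> f' ` {..<r}" using f f' that by (auto simp: bij_betw_def)
    thus ?thesis using that by (simp add: p_def f_inv_into_f)
  qed
  ultimately show ?thesis using that by blast
qed

lemma mult_mat_vec_unit_vec:
  "A \<in> carrier_mat nr n \<Longrightarrow> k < n \<Longrightarrow> (A :: 'a :: comm_ring_1 mat) *\<^sub>v unit_vec n k = col A k"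
  by (intro eq_vecI) auto

lemma vec_eq_smult_unit_vec:
  assumes v: "v \<in> carrier_vec n" and k: "k < n" and supp: "\<And>l. l < n \<Longrightarrow> v $ l \<noteq> 0 \<Longrightarrow> l = k"
  shows "v = (v $ k :: 'a :: comm_ring_1) \<cdot>\<^sub>v unit_vec n k"
proof (rule eq_vecI)
  fix l assume "l < dim_vec (v $ k \<cdot>\<^sub>v unit_vec n k)"
  hence l: "l < n" by simp
  show "v $ l = (v $ k \<cdot>\<^sub>v unit_vec n k) $ l"
    using k supp[OF l] l by (cases "l = k") auto
qed (use v in simp)

lemma index_mat_delete [simp]:
  "r < dim_row A - 1 \<Longrightarrow> c < dim_col A - 1 \<Longrightarrow>
    mat_delete A i j $$ (r, c) = A $$ (insert_index i r, insert_index j c)"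
  by (simp add: mat_delete_def insert_index_def)

lemma replace_col_carrier [simp]: "replace_col A v k \<in> carrier_mat (dim_row A) (dim_col A)"
  and dim_replace_col [simp]: "dim_row (replace_col A v k) = dim_row A" "dim_col (replace_col A v k) = dim_col A"
  and index_replace_col [simp]: "r < dim_row A \<Longrightarrow> c < dim_col A \<Longrightarrow>
    replace_col A v k $$ (r, c) = (if c = k then v $ r else A $$ (r, c))"
  by (auto simp: replace_col_def)

subsection \<open>Minors with arbitrarily ordered rows and columns\<close>

(* Unlike submatrix, the rows and columns are listed in an arbitrary order, so a single column
   can be substituted in place. *)
definition minor_mat :: "'a mat \<Rightarrow> nat \<Rightarrow> (nat \<Rightarrow> nat) \<Rightarrow> (nat \<Rightarrow> nat) \<Rightarrow> 'a mat" where
  "minor_mat B r f g = mat r r (\<lambda>(i, j). B $$ (f i, g j))"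

lemma minor_mat_carrier [simp]: "minor_mat B r f g \<in> carrier_mat r r"
  and dim_minor_mat [simp]: "dim_row (minor_mat B r f g) = r" "dim_col (minor_mat B r f g) = r"
  and index_minor_mat [simp]: "i < r \<Longrightarrow> j < r \<Longrightarrow> minor_mat B r f g $$ (i, j) = B $$ (f i, g j)"
  unfolding minor_mat_def by auto

lemma minor_mat_id: "B \<in> carrier_mat n n \<Longrightarrow> minor_mat B n id id = B"
  by (intro eq_matI) auto

lemma mat_delete_eq_minor_mat:
  "B \<in> carrier_mat (Suc n) (Suc n) \<Longrightarrow> mat_delete B i j = minor_mat B n (insert_index i) (insert_index j)"
  by (intro eq_matI) auto

lemma det_minor_mat_permutes:
  fixes C :: "'a :: comm_ring_1 mat"
  assumes C: "C \<in> carrier_mat n n" and p: "p permutes {0..<n}" and q: "q permutes {0..<n}"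
  shows "det (minor_mat C n p q) = signof p * signof q * det C"
proof -
  have rows: "det (minor_mat M n p' id) = signof p' * det M"
    if "M \<in> carrier_mat n n" "p' permutes {0..<n}" for M :: "'a mat" and p'
    using det_permute_rows[OF that] by (simp add: minor_mat_def)
  have p_lt: "p j < n" and q_lt: "q j < n" if "j < n" for j
    using p q permutes_in_image that by fastforce+
  have CT: "transpose_mat C \<in> carrier_mat n n" using C by simp
  have "minor_mat C n p q = minor_mat (transpose_mat (minor_mat (transpose_mat C) n q id)) n p id"
    using C p_lt q_lt by (intro eq_matI) auto
  also have "det \<dots> = signof p * det (minor_mat (transpose_mat C) n q id)"
    by (simp add: rows[OF _ p] det_transpose[OF minor_mat_carrier])
  also have "\<dots> = signof p * signof q * det C"
    by (simp add: rows[OF CT q] det_transpose[OF C])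
  finally show ?thesis .
qed

lemma abs_det_minor_mat_reindex:
  fixes B :: "'a :: linordered_idom mat"
  assumes "bij_betw f {..<r} I" "bij_betw f' {..<r} I" "bij_betw g {..<r} J" "bij_betw g' {..<r} J"
  shows "\<bar>det (minor_mat B r f g)\<bar> = \<bar>det (minor_mat B r f' g')\<bar>"
proof -
  obtain p where p: "p permutes {0..<r}" "\<And>i. i < r \<Longrightarrow> f' (p i) = f i"
    using bij_betw_permutes_reindex assms(1,2) by metis
  obtain q where q: "q permutes {0..<r}" "\<And>i. i < r \<Longrightarrow> g' (q i) = g i"
    using bij_betw_permutes_reindex assms(3,4) by metis
  have "p i < r" "q i < r" if "i < r" for i using p q permutes_in_image that by fastforce+
  hence "minor_mat B r f g = minor_mat (minor_mat B r f' g') r p q"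
    using p q by (intro eq_matI) auto
  thus ?thesis by (simp add: det_minor_mat_permutes[OF _ p(1) q(1)] abs_mult)
qed

lemma submatrix_carrier_mat:
  assumes "I \<subseteq> {..<dim_row B}" "J \<subseteq> {..<dim_col B}"
  shows "submatrix B I J \<in> carrier_mat (card I) (card J)"
proof (rule carrier_matI)
  have "{i. i < dim_row B \<and> i \<in> I} = I" "{j. j < dim_col B \<and> j \<in> J} = J" using assms by auto
  thus "dim_row (submatrix B I J) = card I" "dim_col (submatrix B I J) = card J"
    by (simp_all only: dim_submatrix)
qed

lemma abs_det_submatrix_eq_minor_mat:
  fixes B :: "'a :: linordered_idom mat"
  assumes I: "I \<subseteq> {..<dim_row B}" and J: "J \<subseteq> {..<dim_col B}"
    and f: "bij_betw f {..<r} I" and g: "bij_betw g {..<r} J"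
  shows "\<bar>det (submatrix B I J)\<bar> = \<bar>det (minor_mat B r f g)\<bar>"
proof -
  have fin: "finite I" "finite J" using I J finite_subset by auto
  have r: "card I = r" "card J = r" using bij_betw_same_card[OF f] bij_betw_same_card[OF g] by auto
  have "{i. i < dim_row B \<and> i \<in> I} = I" "{j. j < dim_col B \<and> j \<in> J} = J" using I J by auto
  hence "submatrix B I J = minor_mat B r (pick I) (pick J)"
    using r by (simp add: submatrix_def minor_mat_def)
  moreover have "bij_betw (pick I) {..<r} I" "bij_betw (pick J) {..<r} J"
    using bij_betw_pick[OF fin(1)] bij_betw_pick[OF fin(2)] r by auto
  ultimately show ?thesis using abs_det_minor_mat_reindex[of "pick I" r I f "pick J" J g] f g by simp
qed

lemma abs_det_submatrix_full:
  fixes B :: "'a :: linordered_idom mat"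
  assumes "B \<in> carrier_mat n n"
  shows "\<bar>det (submatrix B {..<n} {..<n})\<bar> = \<bar>det B\<bar>"
proof -
  have "bij_betw id {..<n} {..<n}" by simp
  with abs_det_submatrix_eq_minor_mat[of "{..<n}" B "{..<n}" id n id] show ?thesis
    using assms by (simp add: minor_mat_id[OF assms])
qed

lemma submatrix_submatrix_UNIV: "submatrix (submatrix B I UNIV) UNIV J = submatrix B I J"
proof (rule eq_matI)
  fix i j assume ij: "i < dim_row (submatrix B I J)" "j < dim_col (submatrix B I J)"
  have "pick J j < dim_col B" using ij pick_le by (simp add: dim_submatrix)
  thus "submatrix (submatrix B I UNIV) UNIV J $$ (i, j) = submatrix B I J $$ (i, j)"
    using ij by (simp add: submatrix_def pick_UNIV)
qed (simp_all add: dim_submatrix)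

subsection \<open>Determinant identities\<close>

lemma det_col_linear:
  fixes M :: "'a :: comm_ring_1 mat" and N :: "'b \<Rightarrow> 'a mat"
  assumes M: "M \<in> carrier_mat n n" and N: "\<And>t. t \<in> T \<Longrightarrow> N t \<in> carrier_mat n n"
    and c0: "c0 < n"
    and other: "\<And>t r j. t \<in> T \<Longrightarrow> r < n \<Longrightarrow> j < n \<Longrightarrow> j \<noteq> c0 \<Longrightarrow> N t $$ (r, j) = M $$ (r, j)"
    and lin: "\<And>r. r < n \<Longrightarrow> M $$ (r, c0) = (\<Sum>t\<in>T. z t * N t $$ (r, c0))"
  shows "det M = (\<Sum>t\<in>T. z t * det (N t))"
proof -
  have cof: "cofactor (N t) r c0 = cofactor M r c0" if t: "t \<in> T" for t r
  proof -
    have "mat_delete (N t) r c0 = mat_delete M r c0"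
      using M N[OF t] other[OF t] c0 by (intro eq_matI) (auto simp: mat_delete_def)
    thus ?thesis unfolding cofactor_def by simp
  qed
  have "det M = (\<Sum>r<n. M $$ (r, c0) * cofactor M r c0)" by (rule laplace_expansion_column[OF M c0])
  also have "\<dots> = (\<Sum>r<n. \<Sum>t\<in>T. z t * (N t $$ (r, c0) * cofactor (N t) r c0))"
    by (intro sum.cong refl) (simp add: lin cof sum_distrib_right mult.assoc)
  also have "\<dots> = (\<Sum>t\<in>T. z t * (\<Sum>r<n. N t $$ (r, c0) * cofactor (N t) r c0))"
    by (subst sum.swap) (simp add: sum_distrib_left)
  also have "\<dots> = (\<Sum>t\<in>T. z t * det (N t))"
    by (intro sum.cong refl) (simp add: laplace_expansion_column[OF N c0])
  finally show ?thesis .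
qed

lemma det_col_smult:
  fixes M N :: "'a :: comm_ring_1 mat"
  assumes "M \<in> carrier_mat n n" "N \<in> carrier_mat n n" "c0 < n"
    and "\<And>r j. r < n \<Longrightarrow> j < n \<Longrightarrow> j \<noteq> c0 \<Longrightarrow> N $$ (r, j) = M $$ (r, j)"
    and "\<And>r. r < n \<Longrightarrow> M $$ (r, c0) = s * N $$ (r, c0)"
  shows "det M = s * det N"
  using det_col_linear[of M n "{()}" "\<lambda>_. N" c0 "\<lambda>_. s"] assms by simp

lemma det_Ints:
  fixes B :: "'a :: comm_ring_1 mat"
  assumes B: "B \<in> carrier_mat n n" and ints: "\<And>i j. i < n \<Longrightarrow> j < n \<Longrightarrow> B $$ (i, j) \<in> \<int>"
  shows "det B \<in> \<int>"
proof -
  have "signof p * (\<Prod>i = 0..<n. B $$ (i, p i)) \<in> \<int>" if p: "p permutes {0..<n}" for p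
  proof -
    have "p i < n" if "i < n" for i using p permutes_in_image that by fastforce
    hence "(\<Prod>i = 0..<n. B $$ (i, p i)) \<in> \<int>" using ints by (intro Ints_prod) auto
    moreover have "(signof p :: 'a) \<in> \<int>" by (cases p rule: sign_cases) auto
    ultimately show ?thesis by (metis Ints_mult)
  qed
  thus ?thesis unfolding det_def'[OF B] by (intro Ints_sum) auto
qed

lemma mult_mat_vec_solvable:
  fixes A :: "'a :: field mat"
  assumes A: "A \<in> carrier_mat n n" and d: "det A \<noteq> 0" and b: "b \<in> carrier_vec n"
  obtains z where "z \<in> carrier_vec n" "A *\<^sub>v z = b"
proof
  define z where "z = (1 / det A) \<cdot>\<^sub>v (adj_mat A *\<^sub>v b)"
  have adj: "adj_mat A \<in> carrier_mat n n" "A * adj_mat A = det A \<cdot>\<^sub>m 1\<^sub>m n" using adj_mat[OF A] by auto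
  show "z \<in> carrier_vec n" unfolding z_def using adj b by simp
  have "A *\<^sub>v z = (1 / det A) \<cdot>\<^sub>v (A *\<^sub>v (adj_mat A *\<^sub>v b))"
    unfolding z_def using A adj b by (simp add: mult_mat_vec)
  also have "A *\<^sub>v (adj_mat A *\<^sub>v b) = (A * adj_mat A) *\<^sub>v b"
    by (rule assoc_mult_mat_vec[OF A adj(1) b, symmetric])
  also have "\<dots> = det A \<cdot>\<^sub>v (1\<^sub>m n *\<^sub>v b)" using adj b by auto
  finally show "A *\<^sub>v z = b" using d b by (simp add: smult_smult_assoc)
qed

lemma cramer_unit_vec:
  fixes A :: "'a :: comm_ring_1 mat"
  assumes A: "A \<in> carrier_mat n n" and w: "w \<in> carrier_vec n" and Aw: "A *\<^sub>v w = unit_vec n a"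
    and a: "a < n" and j: "j < n"
  shows "w $ j * det A = cofactor A a j"
proof -
  let ?C = "replace_col A (unit_vec n a) j"
  have C: "?C \<in> carrier_mat n n" using A replace_col_carrier by fastforce
  have cof: "cofactor ?C r j = cofactor A r j" if "r < n" for r
  proof -
    have "mat_delete ?C r j = mat_delete A r j"
      using A by (intro eq_matI) (auto simp: mat_delete_def replace_col_def)
    thus ?thesis unfolding cofactor_def by simp
  qed
  have "w $ j * det A = det ?C" using cramer_lemma_mat[OF A w j] Aw by simp
  also have "\<dots> = (\<Sum>r<n. ?C $$ (r, j) * cofactor ?C r j)" by (rule laplace_expansion_column[OF C j])
  also have "\<dots> = (\<Sum>r<n. if r = a then cofactor A a j else 0)"
    using A a j by (intro sum.cong refl) (auto simp: cof)
  finally show ?thesis using a by simp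
qed

lemma Ints_solution_if_abs_det_1:
  fixes R :: "'a :: linordered_field mat"
  assumes R: "R \<in> carrier_mat n n" and det_R: "\<bar>det R\<bar> = 1"
    and R_Ints: "\<And>i j. i < n \<Longrightarrow> j < n \<Longrightarrow> R $$ (i, j) \<in> \<int>"
    and w: "w \<in> carrier_vec n" and Rw_Ints: "\<And>i. i < n \<Longrightarrow> (R *\<^sub>v w) $ i \<in> \<int>" and c: "c < n"
  shows "w $ c \<in> \<int>"
proof -
  let ?C = "replace_col R (R *\<^sub>v w) c"
  have dims: "dim_row R = n" "dim_col R = n" using R by auto
  have "?C \<in> carrier_mat n n" using replace_col_carrier[of R] by (simp add: dims)
  moreover have "?C $$ (i, j) \<in> \<int>" if "i < n" "j < n" for i j
    using that R_Ints[OF that] Rw_Ints[OF that(1)] by (simp add: dims)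
  ultimately have "det ?C \<in> \<int>" by (rule det_Ints)
  hence "w $ c * det R \<in> \<int>" using cramer_lemma_mat[OF R w c] by simp
  moreover have "det R = 1 \<or> det R = -1" using det_R by auto
  ultimately show ?thesis by auto
qed

lemma mat_delete_mult_vec_delete:
  fixes A :: "'a :: comm_ring_1 mat"
  assumes A: "A \<in> carrier_mat (Suc n) (Suc n)" and w: "w \<in> carrier_vec (Suc n)"
    and i: "i < Suc n" and b: "b < Suc n" and wb: "w $ b = 0"
  shows "mat_delete A i b *\<^sub>v vec n (\<lambda>c. w $ insert_index b c) = vec n (\<lambda>r. (A *\<^sub>v w) $ insert_index i r)"
proof (rule eq_vecI)
  fix r assume "r < dim_vec (vec n (\<lambda>r. (A *\<^sub>v w) $ insert_index i r))"
  hence r: "r < n" by simp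
  have "(mat_delete A i b *\<^sub>v vec n (\<lambda>c. w $ insert_index b c)) $ r
      = (\<Sum>c<n. A $$ (insert_index i r, insert_index b c) * w $ insert_index b c)"
    using A r by (simp add: scalar_prod_def atLeast0LessThan)
  also have "\<dots> = (\<Sum>j\<in>{..<Suc n} - {b}. A $$ (insert_index i r, j) * w $ j)"
    by (rule sum.reindex_bij_betw[OF bij_betw_insert_index[OF b]])
  also have "\<dots> = (\<Sum>j<Suc n. A $$ (insert_index i r, j) * w $ j)"
    using wb b by (subst sum.remove[of "{..<Suc n}" b]) auto
  also have "\<dots> = vec n (\<lambda>r. (A *\<^sub>v w) $ insert_index i r) $ r"
    using A w r insert_index_less[OF r] by (simp add: scalar_prod_def atLeast0LessThan)
  finally show "(mat_delete A i b *\<^sub>v vec n (\<lambda>c. w $ insert_index b c)) $ r = \<dots>" .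
qed (use A in simp)

lemma det_mat_delete_replace_col_col_eq_0:
  fixes A :: "'a :: comm_ring_1 mat"
  assumes A: "A \<in> carrier_mat (Suc n) (Suc n)" and k: "k < Suc n" and l: "l < Suc n"
    and kl: "k \<noteq> l" and t: "t < Suc n" "t \<noteq> k" "t \<noteq> l"
  shows "det (mat_delete (replace_col A (col A t) k) i l) = 0"
proof -
  let ?N = "mat_delete (replace_col A (col A t) k) i l"
  define c0 where "c0 = delete_index l k"
  define c1 where "c1 = delete_index l t"
  have N: "?N \<in> carrier_mat n n" using A by (simp add: mat_delete_def replace_col_def)
  have c0: "c0 < n" "insert_index l c0 = k"
    using delete_index_less[OF l k kl] insert_delete_index[OF kl] by (auto simp: c0_def)
  have c1: "c1 < n" "insert_index l c1 = t"
    using delete_index_less[OF l t(1) t(3)] insert_delete_index[OF t(3)] by (auto simp: c1_def)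
  have c0_c1: "c0 \<noteq> c1" using c0(2) c1(2) t(2) by auto
  have "col ?N c0 = col ?N c1"
  proof (rule eq_vecI)
    fix r assume "r < dim_vec (col ?N c1)"
    hence "r < n" using A by simp
    thus "col ?N c0 $ r = col ?N c1 $ r"
      using N A c0 c1 k t by (simp add: insert_index_less)
  qed (use N in simp)
  thus ?thesis by (rule det_identical_columns[OF N c0_c1 c0(1) c1(1)])
qed

(* Column k of A[k := A z] is the combination of the columns A^t with coefficients z_t; after
   deleting column l, the terms with t \<notin> {k, l} contain column t twice. *)
lemma det_mat_delete_replace_col_mult_vec:
  fixes A :: "'a :: comm_ring_1 mat"
  assumes A: "A \<in> carrier_mat (Suc n) (Suc n)" and z: "z \<in> carrier_vec (Suc n)"
    and i: "i < Suc n" and k: "k < Suc n" and l: "l < Suc n" and kl: "k \<noteq> l"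
  shows "det (mat_delete (replace_col A (A *\<^sub>v z) k) i l)
    = z $ k * det (mat_delete A i l) + z $ l * det (mat_delete (replace_col A (col A l) k) i l)"
proof -
  define Q where "Q = mat_delete (replace_col A (A *\<^sub>v z) k) i l"
  define N where "N t = mat_delete (replace_col A (col A t) k) i l" for t
  define c0 where "c0 = delete_index l k"
  have c0: "c0 < n" "insert_index l c0 = k"
    using delete_index_less[OF l k kl] insert_delete_index[OF kl] by (auto simp: c0_def)
  have col_ne: "insert_index l c \<noteq> k" if "c \<noteq> c0" for c
    using that c0(2) insert_index_inj_on[of l UNIV] by (metis UNIV_I inj_onD)
  have Q: "Q \<in> carrier_mat n n" and N: "N t \<in> carrier_mat n n" for t
    using A by (simp_all add: Q_def N_def mat_delete_def replace_col_def)
  have Q_index: "Q $$ (r, c) = (if c = c0 then (A *\<^sub>v z) $ insert_index i r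
      else A $$ (insert_index i r, insert_index l c))" if "r < n" "c < n" for r c
    using that A k c0(2) col_ne[of c] by (simp add: Q_def insert_index_less)
  have N_index: "N t $$ (r, c) = (if c = c0 then A $$ (insert_index i r, t)
      else A $$ (insert_index i r, insert_index l c))" if "r < n" "c < n" "t < Suc n" for t r c
    using that A k c0(2) col_ne[of c] by (simp add: N_def insert_index_less)
  have "det Q = (\<Sum>t<Suc n. z $ t * det (N t))"
  proof (rule det_col_linear[OF Q N c0(1)])
    fix r assume r: "r < n"
    have "Q $$ (r, c0) = (\<Sum>t<Suc n. A $$ (insert_index i r, t) * z $ t)"
      using A z r c0 insert_index_less[OF r] by (simp add: Q_index scalar_prod_def atLeast0LessThan)
    also have "\<dots> = (\<Sum>t<Suc n. z $ t * N t $$ (r, c0))"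
      using r c0 by (intro sum.cong refl) (simp add: N_index)
    finally show "Q $$ (r, c0) = (\<Sum>t\<in>{..<Suc n}. z $ t * N t $$ (r, c0))" .
  qed (auto simp: Q_index N_index)
  also have "\<dots> = (\<Sum>t\<in>{k, l}. z $ t * det (N t))"
    using det_mat_delete_replace_col_col_eq_0[OF A k l kl] k l
    by (intro sum.mono_neutral_right) (auto simp: N_def)
  also have "\<dots> = z $ k * det (mat_delete A i l) + z $ l * det (N l)"
  proof -
    have "N k = mat_delete A i l" using N c0 k A by (intro eq_matI) (auto simp: N_index)
    thus ?thesis using kl by simp
  qed
  finally show ?thesis by (simp add: Q_def N_def)
qed

lemma abs_det_mat_delete_replace_col_col:
  fixes A :: "'a :: linordered_idom mat"
  assumes A: "A \<in> carrier_mat (Suc n) (Suc n)"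
    and i: "i < Suc n" and k: "k < Suc n" and l: "l < Suc n" and kl: "k \<noteq> l"
  shows "\<bar>det (mat_delete (replace_col A (col A l) k) i l)\<bar> = \<bar>det (mat_delete A i k)\<bar>"
proof -
  define h where "h = (\<lambda>c. if insert_index l c = k then l else insert_index l c)"
  have dims: "dim_row A = Suc n" "dim_col A = Suc n" using A by auto
  have "mat_delete (replace_col A (col A l) k) i l = minor_mat A n (insert_index i) h"
    using l by (intro eq_matI) (auto simp: h_def dims insert_index_less)
  moreover have "bij_betw h {..<n} ({..<Suc n} - {k})"
  proof -
    have "insert l ({..<Suc n} - {l} - {k}) = {..<Suc n} - {k}" using l kl by auto
    thus ?thesis using bij_betw_subst_value[OF bij_betw_insert_index[OF l], of k l] k kl
      unfolding h_def by simp
  qed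
  ultimately show ?thesis
    using abs_det_minor_mat_reindex[OF bij_betw_insert_index[OF i] bij_betw_insert_index[OF i]]
      bij_betw_insert_index[OF k] mat_delete_eq_minor_mat[OF A] by metis
qed

lemma totally_unimodular_det:
  assumes "totally_unimodular B" "B \<in> carrier_mat n n"
  shows "det B \<in> {-1, 0, 1}"
proof -
  have "det (submatrix B {..<n} {..<n}) \<in> {-1, 0, 1}"
    using assms unfolding totally_unimodular_def by auto
  thus ?thesis unfolding mem_sign_set_iff_abs using abs_det_submatrix_full[OF assms(2)] by simp
qed

lemma rows_lin_indep_if_det_nonzero:
  assumes A: "A \<in> carrier_mat m m" and d: "det A \<noteq> 0" and I: "I \<subseteq> {..<m}"
  shows "rows_lin_indep A I"
  unfolding rows_lin_indep_def
proof (intro conjI allI impI ballI)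
  show "I \<subseteq> {..<dim_row A}" using A I by simp
  fix c i assume h: "\<forall>j<dim_col A. (\<Sum>i\<in>I. c i * A $$ (i, j)) = 0" and i: "i \<in> I"
  define v where "v = vec m (\<lambda>i. if i \<in> I then c i else 0)"
  have v: "v \<in> carrier_vec m" unfolding v_def by simp
  have "transpose_mat A *\<^sub>v v = 0\<^sub>v m"
  proof (rule eq_vecI)
    fix j assume "j < dim_vec (0\<^sub>v m :: rat vec)"
    hence j: "j < m" by simp
    have "(transpose_mat A *\<^sub>v v) $ j = (\<Sum>i<m. if i \<in> I then c i * A $$ (i, j) else 0)"
      using j A v by (auto simp: scalar_prod_def atLeast0LessThan v_def mult.commute intro: sum.cong)
    also have "\<dots> = (\<Sum>i\<in>I. c i * A $$ (i, j))"
      using I by (simp add: sum.If_cases Int_absorb1)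
    finally show "(transpose_mat A *\<^sub>v v) $ j = 0\<^sub>v m $ j" using h j A by simp
  qed (use A in simp)
  moreover have "det (transpose_mat A) \<noteq> 0" using det_transpose[OF A] d by simp
  ultimately have "v = 0\<^sub>v m" using det_0_iff_vec_prod_zero_field[of "transpose_mat A" m] A v by auto
  hence "v $ i = 0" using I i by auto
  thus "c i = 0" using i I unfolding v_def by auto
qed

lemma dim_add_col [simp]: "dim_row (add_col A x) = dim_row A" "dim_col (add_col A x) = Suc (dim_col A)"
  unfolding add_col_def by auto

lemma index_add_col:
  "i < dim_row A \<Longrightarrow> j < dim_col A \<Longrightarrow> add_col A x $$ (i, j) = A $$ (i, j)"
  "i < dim_row A \<Longrightarrow> add_col A x $$ (i, dim_col A) = x $ i"
  unfolding add_col_def by auto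

lemma rows_lin_indep_add_col:
  assumes indep: "rows_lin_indep A I"
  shows "rows_lin_indep (add_col A x) I"
  unfolding rows_lin_indep_def
proof (intro conjI allI impI)
  have I: "I \<subseteq> {..<dim_row A}" using indep unfolding rows_lin_indep_def by simp
  thus "I \<subseteq> {..<dim_row (add_col A x)}" by simp
  fix c assume h: "\<forall>j<dim_col (add_col A x). (\<Sum>i\<in>I. c i * add_col A x $$ (i, j)) = 0"
  have "(\<Sum>i\<in>I. c i * A $$ (i, j)) = 0" if j: "j < dim_col A" for j
  proof -
    have "(\<Sum>i\<in>I. c i * A $$ (i, j)) = (\<Sum>i\<in>I. c i * add_col A x $$ (i, j))"
      using I j by (intro sum.cong) (auto simp: index_add_col)
    thus ?thesis using h j by simp
  qed
  thus "\<forall>i\<in>I. c i = 0" using indep unfolding rows_lin_indep_def by blast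
qed

lemma full_row_rank_submatrix_rows:
  assumes indep: "rows_lin_indep B I"
  shows "full_row_rank (submatrix B I UNIV)"
  unfolding full_row_rank_def rows_lin_indep_def
proof (intro conjI allI impI ballI)
  let ?S = "submatrix B I UNIV"
  have I: "I \<subseteq> {..<dim_row B}" using indep unfolding rows_lin_indep_def by simp
  define r where "r = card I"
  have pick: "bij_betw (pick I) {..<r} I"
    using bij_betw_pick[OF finite_subset[OF I finite_lessThan]] unfolding r_def .
  have eI: "{i. i < dim_row B \<and> i \<in> I} = I" using I by auto
  have dS: "dim_row ?S = r" "dim_col ?S = dim_col B" by (simp_all add: dim_submatrix eI r_def)
  have S_index: "?S $$ (a, j) = B $$ (pick I a, j)" if "a < r" "j < dim_col B" for a j
    using that by (simp add: submatrix_def eI r_def pick_UNIV)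
  show "{..<dim_row ?S} \<subseteq> {..<dim_row ?S}" by simp
  fix c a assume h: "\<forall>j<dim_col ?S. (\<Sum>i\<in>{..<dim_row ?S}. c i * ?S $$ (i, j)) = 0"
    and a: "a \<in> {..<dim_row ?S}"
  define c' where "c' i = c (inv_into {..<r} (pick I) i)" for i
  have c'_pick: "c' (pick I b) = c b" if "b < r" for b
    using pick that by (simp add: c'_def bij_betw_def inv_into_f_f)
  have "(\<Sum>i\<in>I. c' i * B $$ (i, j)) = 0" if j: "j < dim_col B" for j
  proof -
    have "(\<Sum>i\<in>I. c' i * B $$ (i, j)) = (\<Sum>b<r. c' (pick I b) * B $$ (pick I b, j))"
      by (rule sum.reindex_bij_betw[OF pick, symmetric])
    also have "\<dots> = (\<Sum>b<r. c b * ?S $$ (b, j))" by (intro sum.cong refl) (simp add: c'_pick S_index j)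
    finally show ?thesis using h j dS by simp
  qed
  hence "\<forall>i\<in>I. c' i = 0" using indep unfolding rows_lin_indep_def by blast
  moreover have "a < r" using a dS by simp
  moreover from this have "pick I a \<in> I" using pick by (auto simp: bij_betw_def)
  ultimately show "c a = 0" using c'_pick[of a] by simp
qed

lemma equimodular_submatrix_rows_iff:
  assumes indep: "rows_lin_indep B I"
  shows "equimodular (submatrix B I UNIV) \<longleftrightarrow>
    (\<forall>J1 J2. J1 \<subseteq> {..<dim_col B} \<longrightarrow> J2 \<subseteq> {..<dim_col B} \<longrightarrow> card J1 = card I \<longrightarrow> card J2 = card I \<longrightarrow>
       det (submatrix B I J1) \<noteq> 0 \<longrightarrow> det (submatrix B I J2) \<noteq> 0 \<longrightarrow>
       \<bar>det (submatrix B I J1)\<bar> = \<bar>det (submatrix B I J2)\<bar>)"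
proof -
  have "{i. i < dim_row B \<and> i \<in> I} = I" using indep unfolding rows_lin_indep_def by auto
  hence "dim_row (submatrix B I UNIV) = card I" "dim_col (submatrix B I UNIV) = dim_col B"
    by (simp_all add: dim_submatrix)
  thus ?thesis using full_row_rank_submatrix_rows[OF indep]
    unfolding equimodular_def submatrix_submatrix_UNIV by simp
qed

lemma totally_equimodular_minor_mat:
  assumes TE: "totally_equimodular B" and indep: "rows_lin_indep B I"
    and f: "bij_betw f {..<r} I" and g1: "bij_betw g1 {..<r} J1" and g2: "bij_betw g2 {..<r} J2"
    and J1: "J1 \<subseteq> {..<dim_col B}" and J2: "J2 \<subseteq> {..<dim_col B}"
    and "det (minor_mat B r f g1) \<noteq> 0" "det (minor_mat B r f g2) \<noteq> 0"
  shows "\<bar>det (minor_mat B r f g1)\<bar> = \<bar>det (minor_mat B r f g2)\<bar>"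
proof -
  have I: "I \<subseteq> {..<dim_row B}" using indep unfolding rows_lin_indep_def by simp
  have "card J1 = card I" "card J2 = card I"
    using bij_betw_same_card[OF f] bij_betw_same_card[OF g1] bij_betw_same_card[OF g2] by auto
  moreover have "\<bar>det (submatrix B I J1)\<bar> = \<bar>det (minor_mat B r f g1)\<bar>"
    "\<bar>det (submatrix B I J2)\<bar> = \<bar>det (minor_mat B r f g2)\<bar>"
    using abs_det_submatrix_eq_minor_mat[OF I J1 f g1] abs_det_submatrix_eq_minor_mat[OF I J2 f g2] .
  moreover have "equimodular (submatrix B I UNIV)" using TE indep unfolding totally_equimodular_def by blast
  ultimately show ?thesis using equimodular_submatrix_rows_iff[OF indep] J1 J2 assms(8,9)
    by (metis abs_0_eq)
qed

subsection \<open>Minimally non-totally unimodular matrices\<close>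

locale min_non_TU =
  fixes A :: "rat mat" and m :: nat
  assumes A_carrier: "A \<in> carrier_mat m m" and min_non_TU_A: "minimally_non_TU A"
begin

lemma dim_A [simp]: "dim_row A = m" "dim_col A = m"
  using A_carrier by auto

lemma det_proper_submatrix:
  assumes I: "I \<subseteq> {..<m}" and J: "J \<subseteq> {..<m}" and card: "card I = card J"
    and proper: "I \<noteq> {..<m} \<or> J \<noteq> {..<m}"
  shows "det (submatrix A I J) \<in> {-1, 0, 1}"
proof -
  have "totally_unimodular (submatrix A I J)"
    using min_non_TU_A I J proper unfolding minimally_non_TU_def by simp
  moreover have "submatrix A I J \<in> carrier_mat (card I) (card I)"
    using submatrix_carrier_mat[of I A J] I J card by simp
  ultimately show ?thesis by (rule totally_unimodular_det)
qed

lemma det_A_not_unimodular: "det A \<notin> {-1, 0, 1}"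
proof
  assume d: "det A \<in> {-1, 0, 1}"
  have "totally_unimodular A" unfolding totally_unimodular_def
  proof (intro allI impI)
    fix I J assume I: "I \<subseteq> {..<dim_row A}" and J: "J \<subseteq> {..<dim_col A}" and "card I = card J"
    show "det (submatrix A I J) \<in> {-1, 0, 1}"
    proof (cases "I = {..<m} \<and> J = {..<m}")
      case True
      thus ?thesis using d abs_det_submatrix_full[OF A_carrier] unfolding mem_sign_set_iff_abs by simp
    qed (use det_proper_submatrix I J \<open>card I = card J\<close> in auto)
  qed
  thus False using min_non_TU_A unfolding minimally_non_TU_def by simp
qed

lemma det_A_nonzero: "det A \<noteq> 0"
  using det_A_not_unimodular by auto

lemma m_pos: "0 < m"
proof (rule ccontr)
  assume "\<not> 0 < m"
  hence "det A = 1" using A_carrier by simp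
  thus False using det_A_not_unimodular by simp
qed

lemma det_proper_minor_mat:
  assumes f: "bij_betw f {..<r} I" and g: "bij_betw g {..<r} J"
    and I: "I \<subseteq> {..<m}" and J: "J \<subseteq> {..<m}" and r: "r < m"
  shows "det (minor_mat A r f g) \<in> {-1, 0, 1}"
proof -
  have card: "card I = r" "card J = r" using bij_betw_same_card[OF f] bij_betw_same_card[OF g] by auto
  hence "I \<noteq> {..<m}" using r by auto
  hence "det (submatrix A I J) \<in> {-1, 0, 1}" using det_proper_submatrix[OF I J] card by simp
  thus ?thesis using abs_det_submatrix_eq_minor_mat[of I A J f r g] assms
    unfolding mem_sign_set_iff_abs by simp
qed

lemma A_Ints:
  assumes "2 \<le> m" "i < m" "j < m"
  shows "A $$ (i, j) \<in> \<int>"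
proof -
  have "bij_betw (\<lambda>_. i) {..<1::nat} {i}" "bij_betw (\<lambda>_. j) {..<1::nat} {j}"
    by (auto simp: bij_betw_def inj_on_def)
  from det_proper_minor_mat[OF this] assms have "det (minor_mat A 1 (\<lambda>_. i) (\<lambda>_. j)) \<in> {-1, 0, 1}"
    by auto
  thus ?thesis by (auto simp: det_single)
qed

lemma abs_det_A_gt_1:
  assumes "2 \<le> m"
  shows "1 < \<bar>det A\<bar>"
proof -
  have "det A \<in> \<int>" by (intro det_Ints[OF A_carrier] A_Ints[OF assms])
  then obtain k where k: "det A = of_int k" by (elim Ints_cases)
  hence "k \<notin> {-1, 0, 1}" using det_A_not_unimodular by auto
  hence "1 < \<bar>k\<bar>" by auto
  thus ?thesis using k by simp
qed

lemma Suc_m_minus_1 [simp]: "Suc (m - 1) = m" "Suc (m - Suc 0) = m"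
  using m_pos by simp_all

lemma insert_index_less_m [simp]: "r < m - 1 \<Longrightarrow> insert_index i r < m"
  using insert_index_less[of r "m - 1" i] by simp

lemma det_mat_delete_A:
  assumes a: "a < m" and b: "b < m"
  shows "det (mat_delete A a b) \<in> {-1, 0, 1}"
proof -
  have "bij_betw (insert_index a) {..<m - 1} ({..<m} - {a})"
    "bij_betw (insert_index b) {..<m - 1} ({..<m} - {b})"
    using bij_betw_insert_index[of a "m - 1"] bij_betw_insert_index[of b "m - 1"] a b by simp_all
  from det_proper_minor_mat[OF this] m_pos
  have "det (minor_mat A (m - 1) (insert_index a) (insert_index b)) \<in> {-1, 0, 1}" by auto
  thus ?thesis using mat_delete_eq_minor_mat[of A "m - 1" a b] A_carrier by simp
qed

lemma unit_vec_solution_abs_less_1: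
  assumes m2: "2 \<le> m" and a: "a < m" and w: "w \<in> carrier_vec m" "A *\<^sub>v w = unit_vec m a"
    and j: "j < m"
  shows "\<bar>w $ j\<bar> < 1"
proof (rule ccontr)
  assume "\<not> \<bar>w $ j\<bar> < 1"
  hence "\<bar>det A\<bar> \<le> \<bar>w $ j\<bar> * \<bar>det A\<bar>" by (simp add: mult_le_cancel_right1)
  also have "\<dots> = \<bar>cofactor A a j\<bar>" using cramer_unit_vec[OF A_carrier w a j] by (metis abs_mult)
  also have "\<dots> = \<bar>det (mat_delete A a j)\<bar>" by (simp add: cofactor_def abs_mult power_abs)
  also have "\<dots> \<le> 1" using det_mat_delete_A[OF a j] by auto
  finally show False using abs_det_A_gt_1[OF m2] by simp
qed

(* Cramer's rule in a nonsingular, hence unimodular, (m-1)-minor avoiding column b. *)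
lemma unit_vec_solution_Ints:
  assumes m2: "2 \<le> m" and a: "a < m" and b: "b < m"
    and w: "w \<in> carrier_vec m" "A *\<^sub>v w = unit_vec m a" and wb: "w $ b = 0" and j: "j < m"
  shows "w $ j \<in> \<int>"
proof (cases "j = b")
  case False
  obtain i where i: "i < m" "det (mat_delete A i b) \<noteq> 0"
  proof (rule ccontr)
    assume "\<not> thesis"
    hence "\<forall>i<m. cofactor A i b = 0" using that unfolding cofactor_def by auto
    thus False using laplace_expansion_column[OF A_carrier b] det_A_nonzero by simp
  qed
  define R where "R = mat_delete A i b"
  define w' where "w' = vec (m - 1) (\<lambda>c. w $ insert_index b c)"
  have R: "R \<in> carrier_mat (m - 1) (m - 1)" unfolding R_def using mat_delete_carrier[OF A_carrier] .
  have Rw': "R *\<^sub>v w' = vec (m - 1) (\<lambda>r. unit_vec m a $ insert_index i r)"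
    using mat_delete_mult_vec_delete[of A "m - 1" w i b] A_carrier w i b wb
    unfolding R_def w'_def by simp
  have c: "delete_index b j < m - 1" using delete_index_less[of b "m - 1" j] b j False by simp
  have "w' $ delete_index b j \<in> \<int>"
  proof (rule Ints_solution_if_abs_det_1[OF R _ _ _ _ c])
    show "\<bar>det R\<bar> = 1" using det_mat_delete_A[OF i(1) b] i(2) unfolding R_def by auto
    show "R $$ (r, j) \<in> \<int>" if "r < m - 1" "j < m - 1" for r j
      using that A_Ints[OF m2] unfolding R_def by simp
    show "(R *\<^sub>v w') $ r \<in> \<int>" if "r < m - 1" for r
      using that a unfolding Rw' by simp
  qed (simp add: w'_def)
  thus ?thesis using c insert_delete_index[OF False] by (simp add: w'_def)
qed (use wb in simp)

(* A vanishing (m-1)-minor det (A - row a - column b) makes the solution w of A w = e_a vanish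
   at b, hence integral, while |w_j| < 1; so w = 0. *)
lemma det_mat_delete_A_nonzero:
  assumes m2: "2 \<le> m" and a: "a < m" and b: "b < m"
  shows "det (mat_delete A a b) \<noteq> 0"
proof
  assume z: "det (mat_delete A a b) = 0"
  obtain w where w: "w \<in> carrier_vec m" "A *\<^sub>v w = unit_vec m a"
    using mult_mat_vec_solvable[OF A_carrier det_A_nonzero, of "unit_vec m a"] by auto
  have wb: "w $ b = 0"
    using cramer_unit_vec[OF A_carrier w a b] z det_A_nonzero by (simp add: cofactor_def)
  have w_zero: "w $ j = 0" if "j < m" for j
    using unit_vec_solution_Ints[OF m2 a b w wb that] unit_vec_solution_abs_less_1[OF m2 a w that]
    by (rule Ints_abs_less_1_imp_0)
  have "(A *\<^sub>v w) $ a = (\<Sum>j<m. A $$ (a, j) * w $ j)"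
    using A_carrier w(1) a by (simp add: scalar_prod_def atLeast0LessThan)
  also have "\<dots> = 0" by (intro sum.neutral) (simp add: w_zero)
  finally show False using w(2) a by simp
qed

lemma abs_det_mat_delete_A:
  assumes "2 \<le> m" "a < m" "b < m"
  shows "\<bar>det (mat_delete A a b)\<bar> = 1"
  using det_mat_delete_A[OF assms(2,3)] det_mat_delete_A_nonzero[OF assms] by auto

lemma abs_det_minor_mat_A:
  assumes f: "bij_betw f {..<r} I" and g: "bij_betw g {..<r} J"
    and I: "I \<subseteq> {..<m}" and J: "J \<subseteq> {..<m}" and nz: "det (minor_mat A r f g) \<noteq> 0"
  shows "\<bar>det (minor_mat A r f g)\<bar> = (if r < m then 1 else \<bar>det A\<bar>)"
proof (cases "r < m")
  case True
  thus ?thesis using det_proper_minor_mat[OF f g I J True] nz by auto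
next
  case False
  have card: "card I = r" "card J = r" using bij_betw_same_card[OF f] bij_betw_same_card[OF g] by auto
  hence r: "r = m" using card_mono[OF finite_lessThan I] False by simp
  hence "I = {..<m}" "J = {..<m}"
    using card_subset_eq[OF finite_lessThan I] card_subset_eq[OF finite_lessThan J] card by simp_all
  hence "\<bar>det (minor_mat A m f g)\<bar> = \<bar>det (minor_mat A m id id)\<bar>"
    using f g r by (intro abs_det_minor_mat_reindex[of f m "{..<m}" id g "{..<m}" id]) auto
  thus ?thesis using r minor_mat_id[OF A_carrier] by simp
qed

end

subsection \<open>Appending a column\<close>

locale min_non_TU_add_col = min_non_TU +
  fixes x :: "rat vec"
  assumes dim_x: "dim_vec x = m"
begin

abbreviation "Ax \<equiv> add_col A x"

lemma Ax_A [simp]: "i < m \<Longrightarrow> j < m \<Longrightarrow> Ax $$ (i, j) = A $$ (i, j)"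
  and Ax_x [simp]: "i < m \<Longrightarrow> Ax $$ (i, m) = x $ i"
  using index_add_col(1)[of i A j x] index_add_col(2)[of i A x] by auto

lemma rows_lin_indep_Ax: "I \<subseteq> {..<m} \<Longrightarrow> rows_lin_indep Ax I"
  using rows_lin_indep_add_col rows_lin_indep_if_det_nonzero[OF A_carrier det_A_nonzero] by blast

lemma zero_or_signed_col_iff_smult_col:
  "(x = 0\<^sub>v m \<or> (\<exists>j<m. x = col A j \<or> x = - col A j)) \<longleftrightarrow> (\<exists>j<m. \<exists>s\<in>{-1, 0, 1}. x = s \<cdot>\<^sub>v col A j)"
proof -
  have "0 \<cdot>\<^sub>v col A j = 0\<^sub>v m" "-1 \<cdot>\<^sub>v col A j = - col A j" "1 \<cdot>\<^sub>v col A j = col A j" for j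
    by (intro eq_vecI; simp)+
  thus ?thesis using m_pos by auto
qed

lemma det_minor_mat_Ax_subst_col:
  assumes x: "x = s \<cdot>\<^sub>v col A j" and j: "j < m"
    and f: "\<And>a. a < r \<Longrightarrow> f a < m" and g: "bij_betw g {..<r} J" and J: "J \<subseteq> {..<Suc m}"
    and c0: "c0 < r" "g c0 = m"
  shows "det (minor_mat Ax r f g) = s * det (minor_mat A r f (\<lambda>b. if g b = m then j else g b))"
proof (rule det_col_smult[OF _ _ c0(1)])
  have g_lt: "g b < m" if "b < r" "b \<noteq> c0" for b
  proof -
    have "g b \<noteq> g c0" using that c0(1) g by (metis bij_betw_def inj_onD lessThan_iff)
    moreover have "g b < Suc m" using g J that(1) by (auto simp: bij_betw_def)
    ultimately show ?thesis using c0(2) by simp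
  qed
  show "minor_mat A r f (\<lambda>b. if g b = m then j else g b) $$ (a, b) = minor_mat Ax r f g $$ (a, b)"
    if "a < r" "b < r" "b \<noteq> c0" for a b
    using that g_lt[OF that(2,3)] f[OF that(1)] by simp
  show "minor_mat Ax r f g $$ (a, c0) = s * minor_mat A r f (\<lambda>b. if g b = m then j else g b) $$ (a, c0)"
    if "a < r" for a
  proof -
    have "x $ f a = s * A $$ (f a, j)" using f[OF that] j unfolding x by simp
    thus ?thesis using that c0 f[OF that] by simp
  qed
qed simp_all

lemma abs_det_minor_mat_Ax:
  assumes x: "x = s \<cdot>\<^sub>v col A j" and j: "j < m" and s: "s \<in> {-1, 0, 1}"
    and f: "bij_betw f {..<r} I" and g: "bij_betw g {..<r} J"
    and I: "I \<subseteq> {..<m}" and J: "J \<subseteq> {..<Suc m}" and nz: "det (minor_mat Ax r f g) \<noteq> 0"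
  shows "\<bar>det (minor_mat Ax r f g)\<bar> = (if r < m then 1 else \<bar>det A\<bar>)"
proof -
  have f_lt: "f a < m" if "a < r" for a using f I that by (auto simp: bij_betw_def)
  show ?thesis
  proof (cases "m \<in> J")
    case False
    hence J': "J \<subseteq> {..<m}" using J by (auto simp: less_Suc_eq)
    hence "minor_mat Ax r f g = minor_mat A r f g"
      using f_lt g by (intro eq_matI) (auto simp: bij_betw_def)
    thus ?thesis using abs_det_minor_mat_A[OF f g I J'] nz by simp
  next
    case True
    then obtain c0 where c0: "c0 < r" "g c0 = m" using g by (auto simp: bij_betw_def)
    define g' where "g' = (\<lambda>b. if g b = m then j else g b)"
    have det_eq: "det (minor_mat Ax r f g) = s * det (minor_mat A r f g')"
      unfolding g'_def by (rule det_minor_mat_Ax_subst_col[OF x j f_lt g J c0])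
    have "j \<notin> J"
    proof
      assume "j \<in> J"
      then obtain c1 where c1: "c1 < r" "g c1 = j" using g by (auto simp: bij_betw_def)
      have "c0 \<noteq> c1" using c1 c0 j by auto
      moreover have "col (minor_mat A r f g') c0 = col (minor_mat A r f g') c1"
        using c0 c1 j by (intro eq_vecI) (auto simp: g'_def)
      ultimately have "det (minor_mat A r f g') = 0"
        using det_identical_columns[OF minor_mat_carrier _ c0(1) c1(1)] by simp
      thus False using det_eq nz by simp
    qed
    have "bij_betw g' {..<r} (insert j (J - {m}))"
      unfolding g'_def by (rule bij_betw_subst_value[OF g True \<open>j \<notin> J\<close>])
    moreover have "insert j (J - {m}) \<subseteq> {..<m}" using J j by (auto simp: less_Suc_eq)
    moreover have "det (minor_mat A r f g') \<noteq> 0" using det_eq nz by auto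
    ultimately have "\<bar>det (minor_mat A r f g')\<bar> = (if r < m then 1 else \<bar>det A\<bar>)"
      using abs_det_minor_mat_A[OF f _ I] by blast
    moreover have "\<bar>s\<bar> = 1" using s det_eq nz by auto
    ultimately show ?thesis using det_eq by (simp add: abs_mult)
  qed
qed

lemma totally_equimodular_if_smult_col:
  assumes "x = s \<cdot>\<^sub>v col A j" "j < m" "s \<in> {-1, 0, 1}"
  shows "totally_equimodular Ax"
  unfolding totally_equimodular_def
proof (intro allI impI)
  fix I assume indep: "rows_lin_indep Ax I"
  have I: "I \<subseteq> {..<m}" using indep unfolding rows_lin_indep_def by simp
  have pick_I: "bij_betw (pick I) {..<card I} I"
    using bij_betw_pick[OF finite_subset[OF I finite_lessThan]] .
  have formula: "\<bar>det (submatrix Ax I J)\<bar> = (if card I < m then 1 else \<bar>det A\<bar>)"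
    if J: "J \<subseteq> {..<Suc m}" "card J = card I" "det (submatrix Ax I J) \<noteq> 0" for J
  proof -
    have pick_J: "bij_betw (pick J) {..<card I} J"
      using bij_betw_pick[OF finite_subset[OF J(1) finite_lessThan]] J(2) by simp
    have "\<bar>det (submatrix Ax I J)\<bar> = \<bar>det (minor_mat Ax (card I) (pick I) (pick J))\<bar>"
      using abs_det_submatrix_eq_minor_mat[of I Ax J "pick I" "card I" "pick J"] pick_I pick_J I J(1)
      by simp
    moreover from this have "det (minor_mat Ax (card I) (pick I) (pick J)) \<noteq> 0" using J(3) by auto
    ultimately show ?thesis using abs_det_minor_mat_Ax[OF assms pick_I pick_J I J(1)] by simp
  qed
  show "equimodular (submatrix Ax I UNIV)"
    unfolding equimodular_submatrix_rows_iff[OF indep]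
  proof (intro allI impI)
    fix J1 J2 assume "J1 \<subseteq> {..<dim_col Ax}" "J2 \<subseteq> {..<dim_col Ax}" "card J1 = card I" "card J2 = card I"
      "det (submatrix Ax I J1) \<noteq> 0" "det (submatrix Ax I J2) \<noteq> 0"
    thus "\<bar>det (submatrix Ax I J1)\<bar> = \<bar>det (submatrix Ax I J2)\<bar>" using formula by simp
  qed
qed

lemma abs_det_minor_mat_Ax_eq:
  assumes TE: "totally_equimodular Ax" and I: "I \<subseteq> {..<m}"
    and f: "bij_betw f {..<r} I" and g1: "bij_betw g1 {..<r} J1" and g2: "bij_betw g2 {..<r} J2"
    and J1: "J1 \<subseteq> {..<Suc m}" and J2: "J2 \<subseteq> {..<Suc m}"
    and "det (minor_mat Ax r f g1) \<noteq> 0" "det (minor_mat Ax r f g2) \<noteq> 0"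
  shows "\<bar>det (minor_mat Ax r f g1)\<bar> = \<bar>det (minor_mat Ax r f g2)\<bar>"
  using totally_equimodular_minor_mat[OF TE rows_lin_indep_Ax[OF I] f g1 g2] assms by simp

lemma replace_col_x_eq_minor_mat:
  "replace_col A x k = minor_mat Ax m id (\<lambda>j. if j = k then m else j)"
proof (rule eq_matI)
  fix i j assume "i < dim_row (minor_mat Ax m id (\<lambda>j. if j = k then m else j))"
    "j < dim_col (minor_mat Ax m id (\<lambda>j. if j = k then m else j))"
  thus "replace_col A x k $$ (i, j) = minor_mat Ax m id (\<lambda>j. if j = k then m else j) $$ (i, j)"
    by simp
qed simp_all

lemma solution_entry_sign:
  assumes TE: "totally_equimodular Ax" and z: "z \<in> carrier_vec m" and Az: "A *\<^sub>v z = x"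
    and k: "k < m"
  shows "z $ k \<in> {-1, 0, 1}"
proof (cases "z $ k = 0")
  case False
  let ?g = "\<lambda>j. if j = k then m else j"
  have det_xk: "det (minor_mat Ax m id ?g) = z $ k * det A"
    using cramer_lemma_mat[OF A_carrier z k] Az replace_col_x_eq_minor_mat by simp
  have A_eq: "minor_mat Ax m id id = A" using A_carrier by (intro eq_matI) auto
  have "bij_betw ?g {..<m} (insert m ({..<m} - {k}))"
    using bij_betw_subst_value[OF bij_betw_id, of k "{..<m}" m] k unfolding id_def by simp
  hence "\<bar>det (minor_mat Ax m id ?g)\<bar> = \<bar>det (minor_mat Ax m id id)\<bar>"
    using False det_A_nonzero det_xk A_eq
    by (intro abs_det_minor_mat_Ax_eq[OF TE order_refl]) auto
  hence "\<bar>z $ k\<bar> * \<bar>det A\<bar> = 1 * \<bar>det A\<bar>" using det_xk A_eq by (simp add: abs_mult)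
  hence "\<bar>z $ k\<bar> = 1" using det_A_nonzero by (metis abs_eq_0 mult_right_cancel)
  thus ?thesis by auto
qed simp

(* Comparison with the unit minor det (A - row i - column l), which has the same rows. *)
lemma det_mat_delete_replace_col_x:
  assumes TE: "totally_equimodular Ax" and i: "i < m" and k: "k < m" and l: "l < m" and kl: "k \<noteq> l"
  shows "det (mat_delete (replace_col A x k) i l) \<in> {-1, 0, 1}"
proof -
  define g where "g = (\<lambda>c. if insert_index l c = k then m else insert_index l c)"
  have bij_i: "bij_betw (insert_index i) {..<m - 1} ({..<m} - {i})"
    and bij_l: "bij_betw (insert_index l) {..<m - 1} ({..<m} - {l})"
    using bij_betw_insert_index[of i "m - 1"] bij_betw_insert_index[of l "m - 1"] i l by simp_all
  have bij_g: "bij_betw g {..<m - 1} (insert m ({..<m} - {l} - {k}))"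
    unfolding g_def by (rule bij_betw_subst_value[OF bij_l]) (use k kl in auto)
  have Q: "mat_delete (replace_col A x k) i l = minor_mat Ax (m - 1) (insert_index i) g"
    using dim_x by (intro eq_matI) (auto simp: g_def)
  have R: "mat_delete A i l = minor_mat Ax (m - 1) (insert_index i) (insert_index l)"
    by (intro eq_matI) auto
  have R1: "\<bar>det (mat_delete A i l)\<bar> = 1" using abs_det_mat_delete_A i l k kl by simp
  have "\<bar>det (minor_mat Ax (m - 1) (insert_index i) g)\<bar> = \<bar>det (mat_delete A i l)\<bar>"
    if "det (minor_mat Ax (m - 1) (insert_index i) g) \<noteq> 0"
    unfolding R using that R1 R
    by (intro abs_det_minor_mat_Ax_eq[OF TE _ bij_i bij_g bij_l]) auto
  thus ?thesis unfolding Q using R1 by force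
qed

lemma solution_support_le_1:
  assumes TE: "totally_equimodular Ax" and z: "z \<in> carrier_vec m" and Az: "A *\<^sub>v z = x"
    and k: "k < m" and l: "l < m" and zk: "z $ k \<noteq> 0" and zl: "z $ l \<noteq> 0"
  shows "k = l"
proof (rule ccontr)
  assume kl: "k \<noteq> l"
  have m2: "2 \<le> m" using k l kl by linarith
  have A': "A \<in> carrier_mat (Suc (m - 1)) (Suc (m - 1))" and z': "z \<in> carrier_vec (Suc (m - 1))"
    using A_carrier z by simp_all
  define P where "P = replace_col A x k"
  have P: "P \<in> carrier_mat m m" unfolding P_def using replace_col_carrier[of A] by simp
  have "det (mat_delete P i l) = 0" if i: "i < m" for i
  proof -
    have "z $ k \<in> {-1, 1}" "z $ l \<in> {-1, 1}" using solution_entry_sign TE z Az k l zk zl by auto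
    moreover have "det (mat_delete A i l) \<in> {-1, 1}"
      using abs_det_mat_delete_A[OF m2 i l] by auto
    moreover have "\<bar>det (mat_delete (replace_col A (col A l) k) i l)\<bar> = 1"
      using abs_det_mat_delete_replace_col_col[OF A', of i k l] abs_det_mat_delete_A[OF m2 i k] i k l kl
      by simp
    hence "det (mat_delete (replace_col A (col A l) k) i l) \<in> {-1, 1}" by auto
    moreover have "det (mat_delete P i l) = z $ k * det (mat_delete A i l)
        + z $ l * det (mat_delete (replace_col A (col A l) k) i l)"
      using det_mat_delete_replace_col_mult_vec[OF A' z'] i k l kl Az unfolding P_def by simp
    moreover have "det (mat_delete P i l) \<in> {-1, 0, 1}"
      using det_mat_delete_replace_col_x[OF TE i k l kl] unfolding P_def .
    ultimately show ?thesis by auto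
  qed
  hence "det P = 0" using laplace_expansion_column[OF P l] by (simp add: cofactor_def)
  moreover have "det P = z $ k * det A" using cramer_lemma_mat[OF A_carrier z k] Az by (simp add: P_def)
  ultimately show False using zk det_A_nonzero by simp
qed

lemma smult_col_if_totally_equimodular:
  assumes TE: "totally_equimodular Ax"
  shows "\<exists>j<m. \<exists>s\<in>{-1, 0, 1}. x = s \<cdot>\<^sub>v col A j"
proof -
  obtain z where z: "z \<in> carrier_vec m" "A *\<^sub>v z = x"
    using mult_mat_vec_solvable[OF A_carrier det_A_nonzero] dim_x carrier_vecI by metis
  obtain k where k: "k < m" and supp: "\<And>l. l < m \<Longrightarrow> z $ l \<noteq> 0 \<Longrightarrow> l = k"
  proof (cases "\<exists>k<m. z $ k \<noteq> 0")
    case True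
    then obtain k where "k < m" "z $ k \<noteq> 0" by blast
    with solution_support_le_1[OF TE z] that[of k] show ?thesis by metis
  qed (use m_pos in auto)
  have "x = A *\<^sub>v (z $ k \<cdot>\<^sub>v unit_vec m k)" using vec_eq_smult_unit_vec[OF z(1) k supp] z(2) by simp
  also have "\<dots> = z $ k \<cdot>\<^sub>v col A k"
    using A_carrier k by (simp add: mult_mat_vec mult_mat_vec_unit_vec)
  finally show ?thesis using k solution_entry_sign[OF TE z k] by blast
qed

end

theorem mainTheorem9:
  fixes A :: "rat mat" and x :: "rat vec" and m :: nat
  assumes "A \<in> carrier_mat m m"
    and "dim_vec x = m"
    and "minimally_non_TU A"
  shows "totally_equimodular (add_col A x) \<longleftrightarrow>
         (x = 0\<^sub>v m \<or> (\<exists>j<m. x = col A j \<or> x = - col A j))"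
proof -
  interpret min_non_TU_add_col A m x
    using assms by unfold_locales
  show ?thesis
    unfolding zero_or_signed_col_iff_smult_col
  proof
    assume "totally_equimodular Ax"
    thus "\<exists>j<m. \<exists>s\<in>{-1, 0, 1}. x = s \<cdot>\<^sub>v col A j" by (rule smult_col_if_totally_equimodular)
  next
    assume "\<exists>j<m. \<exists>s\<in>{-1, 0, 1}. x = s \<cdot>\<^sub>v col A j"
    thus "totally_equimodular Ax" using totally_equimodular_if_smult_col by blast
  qed
qed

end
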